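(* Let $m\in(0,2]$ and let $f(x)=\sum_{k=0}^{\infty}x^ka_k$, $a_k\in\mathbb{O}$, be a slice regular function on $\mathbb{B}$ such that $|f(x)|\le 1$ for all $x\in\mathbb{B}$. Then $$\mathcal{A}_f(x):=|a_0|^m+\sum_{k=1}^{\infty}|x^ka_k|\le 1\quad\text{for all } x\in\mathbb{B} \text{ with } |x|\le R_m:=\frac{m}{2+m}.$$ Moreover, the constant $R_m$ is best possible for each $m$: for every $r\in(R_m,1)$ there exist a slice regular $f$ on $\mathbb{B}$ with $|f|\le1$ on $\mathbb{B}$ and $x\in\mathbb{B}$ with $|x|=r$ such that $\mathcal{A}_f(x)>1$.
   Context: $\mathbb{O}$ denotes the real algebra of octonions (the 8-dimensional non-commutative, non-associative but alternative normed division algebra over $\mathbb{R}$), with modulus $|x|=\sqrt{x\overline{x}}$ equal to the Euclidean norm on $\mathbb{R}^8$; the modulus is multiplicative, $|xy|=|x||y|$. $\mathbb{B}=\{x\in\mathbb{O}:|x|<1\}$ is the open unit ball. A slice regular function on $\mathbb{B}$ is (equivalently) a function of the form $f(x)=\sum_{k=0}^{\infty}x^ka_k$ with coefficients $a_k\in\mathbb{O}$ placed on the right, the series converging for every $x\in\mathbb{B}$ (the powers $x^k$ are unambiguous since $\mathbb{O}$ is alternative). *)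

theory Defs
  imports "HOL-Analysis.Analysis"
begin

text \<open>Octonions via the Cayley--Dickson construction:
  quaternions are pairs of complex numbers, octonions are pairs of quaternions,
  with product (a,b)(c,d) = (ac - d* b, da + b c*).  The norm is the product
  norm from HOL-Analysis, i.e. the Euclidean norm on R^8.\<close>

type_synonym quat = "complex \<times> complex"
type_synonym oct = "quat \<times> quat"

definition qconj :: "quat \<Rightarrow> quat" where
  "qconj q = (cnj (fst q), - snd q)"

definition qmult :: "quat \<Rightarrow> quat \<Rightarrow> quat" where
  "qmult p q = (fst p * fst q - cnj (snd q) * snd p,
                snd q * fst p + snd p * cnj (fst q))"

definition oconj :: "oct \<Rightarrow> oct" where
  "oconj x = (qconj (fst x), - snd x)"

definition omult :: "oct \<Rightarrow> oct \<Rightarrow> oct" where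
  "omult x y = (qmult (fst x) (fst y) - qmult (qconj (snd y)) (snd x),
                qmult (snd y) (fst x) + qmult (snd x) (qconj (fst y)))"

definition oone :: oct where
  "oone = ((1, 0), (0, 0))"

primrec opow :: "oct \<Rightarrow> nat \<Rightarrow> oct" where
  "opow x 0 = oone"
| "opow x (Suc k) = omult x (opow x k)"

definition slice_series :: "(nat \<Rightarrow> oct) \<Rightarrow> oct \<Rightarrow> oct" where
  "slice_series a x = (\<Sum>k. omult (opow x k) (a k))"

definition slice_regular_ball :: "(nat \<Rightarrow> oct) \<Rightarrow> bool" where
  "slice_regular_ball a \<longleftrightarrow> (\<forall>x::oct. norm x < 1 \<longrightarrow> summable (\<lambda>k. omult (opow x k) (a k)))"

definition bohr_tail_summable :: "(nat \<Rightarrow> oct) \<Rightarrow> oct \<Rightarrow> bool" where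
  "bohr_tail_summable a x \<longleftrightarrow> summable (\<lambda>k. norm (omult (opow x (Suc k)) (a (Suc k))))"

definition bohr_sum :: "real \<Rightarrow> (nat \<Rightarrow> oct) \<Rightarrow> oct \<Rightarrow> real" where
  "bohr_sum m a x = norm (a 0) powr m + (\<Sum>k. norm (omult (opow x (Suc k)) (a (Suc k))))"

end

theory Submission
  imports Defs "HOL-Complex_Analysis.Riemann_Mapping"
begin

text \<open>Every octonion lies in a complex slice \<open>\<complex>\<^sub>I = span {1, I}\<close>, and on \<open>\<complex>\<^sub>I\<close> the function
  \<open>f\<close> is the power series \<open>\<Sum> z\<^sup>n a\<^sub>n\<close>. Take a unit \<open>u\<close> with \<open>a\<^sub>0 = |a\<^sub>0| u\<close> and write
  \<open>a\<^sub>k = c u\<close> with \<open>c \<in> \<complex>\<^sub>I\<close>. The orthogonal projection onto the plane spanned by \<open>u\<close> and \<open>I u\<close>,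
  read as a complex number, has norm at most 1 and commutes with left multiplication by \<open>\<complex>\<^sub>I\<close>, so it
  turns \<open>f\<close> into a complex power series bounded by 1 with coefficients \<open>|a\<^sub>0|\<close> at 0 and \<open>c\<close> at \<open>k\<close>.
  Schwarz--Pick together with Wiener's averaging over roots of unity gives
  \<open>|a\<^sub>k| \<le> 1 - |a\<^sub>0|\<^sup>2\<close>; summing the geometric series, \<open>\<A>\<^sub>f(x) \<le> t\<^sup>m + (1 - t\<^sup>2) r / (1 - r)\<close>
  with \<open>t = |a\<^sub>0|\<close>, \<open>r = |x|\<close>, and this is at most 1 for \<open>r \<le> m / (2 + m)\<close> by the weighted
  AM--GM inequality \<open>t\<^sup>m \<le> (m/2) t\<^sup>2 + 1 - m/2\<close>. The Moebius maps \<open>(t - x)(1 - t x)\<^sup>-\<^sup>1\<close> with real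
  \<open>t \<rightarrow> 1\<close> attain \<open>t\<^sup>m + (1 - t\<^sup>2) r / (1 - t r)\<close>, which exceeds 1 near \<open>t = 1\<close> once \<open>r > m / (2 + m)\<close>.\<close>

section \<open>Coefficient bounds for bounded holomorphic functions\<close>

lemma Schwarz_Pick_deriv_0:
  assumes holG: "G holomorphic_on ball 0 1"
    and G1: "\<And>z. norm z < 1 \<Longrightarrow> norm (G z) < 1"
  shows "norm (deriv G 0) \<le> 1 - (norm (G 0))\<^sup>2"
proof -
  define a where "a = G 0"
  have a: "norm a < 1"
    using G1[of 0] by (simp add: a_def)
  have den: "1 - cnj a * a = of_real (1 - (norm a)\<^sup>2)"
    by (simp add: complex_mult_cnj cmod_power2 mult.commute)
  have pos: "0 < 1 - (norm a)\<^sup>2"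
    using a by (simp add: abs_square_less_1)
  define F where "F = Moebius_function 0 a \<circ> G"
  have "F holomorphic_on ball 0 1"
    unfolding F_def using G1
    by (intro holomorphic_on_compose_gen[OF holG Moebius_function_holomorphic[OF a]]) auto
  moreover have "F 0 = 0"
    by (simp add: F_def a_def Moebius_function_eq_zero)
  moreover have "norm (F z) < 1" if "norm z < 1" for z
    using Moebius_function_norm_lt_1[OF a G1[OF that]] by (simp add: F_def)
  ultimately have F': "norm (deriv F 0) \<le> 1"
    using Schwarz_Lemma(2)[of F 0] by simp
  have "1 - cnj a * a \<noteq> 0"
    unfolding den of_real_eq_0_iff using pos by linarith
  then have "(Moebius_function 0 a has_field_derivative 1 / (1 - cnj a * a)) (at a)"
    unfolding Moebius_function_def
    by (auto intro!: derivative_eq_intros simp: power2_eq_square)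
  moreover have "(G has_field_derivative deriv G 0) (at 0)"
    using holG by (intro holomorphic_derivI[of _ "ball 0 1"]) auto
  ultimately have "(F has_field_derivative deriv G 0 / (1 - cnj a * a)) (at 0)"
    unfolding F_def a_def using DERIV_chain by fastforce
  then have "deriv F 0 = deriv G 0 / of_real (1 - (norm a)\<^sup>2)"
    unfolding den by (rule DERIV_imp_deriv)
  then have "norm (deriv F 0) = norm (deriv G 0) / (1 - (norm a)\<^sup>2)"
    using pos by (simp only: norm_divide norm_of_real abs_of_pos)
  then show ?thesis
    using F' pos by (simp add: a_def divide_le_eq)
qed

text \<open>Schwarz--Pick needs a map into the open disc, so it is applied to \<open>\<rho> f\<close> and \<open>\<rho> \<rightarrow> 1\<close>.\<close>
lemma bounded_power_series_coeff_1_le: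
  fixes d :: "nat \<Rightarrow> complex"
  assumes S: "\<And>z. norm z < 1 \<Longrightarrow> summable (\<lambda>n. d n * z ^ n)"
    and B: "\<And>z. norm z < 1 \<Longrightarrow> norm (\<Sum>n. d n * z ^ n) \<le> 1"
  shows "norm (d 1) \<le> 1 - (norm (d 0))\<^sup>2"
proof -
  define G where "G = (\<lambda>z. \<Sum>n. d n * z ^ n)"
  have G': "(G has_field_derivative (\<Sum>n. diffs d n * z ^ n)) (at z)" if "norm z < 1" for z
    unfolding G_def by (rule termdiffs_strong'[of 1]) (use S that in auto)
  have holG: "G holomorphic_on ball 0 1"
    unfolding holomorphic_on_def field_differentiable_def
    by (metis G' has_field_derivative_at_within mem_ball dist_0_norm)
  have G'0: "(G has_field_derivative d 1) (at 0)"
    using G'[of 0] by (simp add: diffs_def)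
  have scaled: "\<rho> * norm (d 1) + \<rho>\<^sup>2 * (norm (d 0))\<^sup>2 \<le> 1" if \<rho>: "0 < \<rho>" "\<rho> < 1" for \<rho>
  proof -
    have "norm (of_real \<rho> * G z) < 1" if "norm z < 1" for z
    proof -
      have "norm (of_real \<rho> * G z) \<le> \<rho>"
        using B[OF that] \<rho> by (simp add: G_def norm_mult mult_left_le)
      then show ?thesis
        using \<rho> by linarith
    qed
    then have "norm (deriv (\<lambda>z. of_real \<rho> * G z) 0) \<le> 1 - (norm (of_real \<rho> * G 0))\<^sup>2"
      by (intro Schwarz_Pick_deriv_0 holomorphic_intros holG)
    moreover have "deriv (\<lambda>z. of_real \<rho> * G z) 0 = of_real \<rho> * d 1"
      by (intro DERIV_imp_deriv DERIV_cmult G'0)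
    ultimately show ?thesis
      using \<rho> by (simp add: G_def norm_mult power_mult_distrib)
  qed
  have "((\<lambda>\<rho>. \<rho> * norm (d 1) + \<rho>\<^sup>2 * (norm (d 0))\<^sup>2) \<longlongrightarrow> 1 * norm (d 1) + 1\<^sup>2 * (norm (d 0))\<^sup>2)
          (at_left (1::real))"
    by (intro tendsto_intros)
  moreover have "eventually (\<lambda>\<rho>. \<rho> * norm (d 1) + \<rho>\<^sup>2 * (norm (d 0))\<^sup>2 \<le> 1) (at_left (1::real))"
  proof -
    have "eventually (\<lambda>\<rho>. \<rho> \<in> {0<..<1}) (at_left (1::real))"
      by (rule eventually_at_left_real) simp
    then show ?thesis
      by eventually_elim (metis greaterThanLessThan_iff scaled)
  qed
  ultimately have "1 * norm (d 1) + 1\<^sup>2 * (norm (d 0))\<^sup>2 \<le> 1"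
    by (rule tendsto_upperbound) simp
  then show ?thesis
    by simp
qed

lemma sum_powers_root_of_unity:
  fixes k n :: nat
  assumes k: "k > 0"
  defines "\<omega> \<equiv> exp (2 * of_real pi * \<i> / of_nat k) :: complex"
  shows "(\<Sum>j<k. (\<omega> ^ j) ^ n) = (if k dvd n then of_nat k else 0)"
proof -
  have \<omega>_power: "\<omega> ^ n = exp (2 * of_real pi * \<i> * of_nat n / of_nat k)" for n
    unfolding \<omega>_def exp_of_nat_mult[symmetric] by (simp add: field_simps)
  have \<omega>_power_eq_1: "\<omega> ^ n = 1 \<longleftrightarrow> k dvd n" for n
    unfolding \<omega>_power using k by (intro complex_root_unity_eq_1) simp
  have "(\<Sum>j<k. (\<omega> ^ j) ^ n) = (\<Sum>j<k. (\<omega> ^ n) ^ j)"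
    by (simp add: power_mult[symmetric] mult.commute)
  also have "\<dots> = (if k dvd n then of_nat k else 0)"
  proof (cases "k dvd n")
    case True
    then have "\<omega> ^ n = 1"
      using \<omega>_power_eq_1 by simp
    then show ?thesis
      using True by simp
  next
    case False
    have "(\<omega> ^ n) ^ k = (\<omega> ^ k) ^ n"
      by (simp add: power_mult[symmetric] mult.commute)
    then have "(\<omega> ^ n) ^ k = 1"
      using \<omega>_power_eq_1[of k] by simp
    then show ?thesis
      using False \<omega>_power_eq_1[of n] by (simp add: geometric_sum)
  qed
  finally show ?thesis .
qed

lemma complex_nth_root_in_disc:
  fixes w :: complex
  assumes "norm w < 1" "k > 0"
  obtains z where "norm z < 1" "z ^ k = w"
proof -
  obtain z where z: "z ^ k = w"
  proof (cases "w = 0")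
    case False
    then have "card {z. z ^ k = w} > 0"
      using assms by (simp add: card_nth_roots)
    then show ?thesis
      using that card_gt_0_iff by fastforce
  qed (use assms in simp)
  moreover have "norm z ^ k < 1"
    using z assms by (simp add: norm_power[symmetric])
  then have "norm z < 1"
    by (simp add: power_less_one_iff)
  ultimately show ?thesis
    using that by blast
qed

text \<open>Wiener's trick: averaging \<open>f\<close> over the rotations by \<open>k\<close>-th roots of unity keeps exactly the
  terms \<open>c\<^sub>m\<^sub>k z\<^sup>m\<^sup>k\<close>, a bounded power series in \<open>z\<^sup>k\<close> to which the case \<open>k = 1\<close> applies.\<close>
lemma bounded_power_series_coeff_le:
  fixes c :: "nat \<Rightarrow> complex"
  assumes S: "\<And>z. norm z < 1 \<Longrightarrow> summable (\<lambda>n. c n * z ^ n)"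
    and B: "\<And>z. norm z < 1 \<Longrightarrow> norm (\<Sum>n. c n * z ^ n) \<le> 1"
    and k: "k > 0"
  shows "norm (c k) \<le> 1 - (norm (c 0))\<^sup>2"
proof -
  define f where "f = (\<lambda>z. \<Sum>n. c n * z ^ n)"
  define \<omega> :: complex where "\<omega> = exp (2 * of_real pi * \<i> / of_nat k)"
  have "norm \<omega> = 1"
    by (simp add: \<omega>_def)
  then have rotate: "norm (\<omega> ^ j * z) = norm z" for j z
    by (simp add: norm_mult norm_power)
  have average: "(\<lambda>m. c (m * k) * (z ^ k) ^ m) sums ((\<Sum>j<k. f (\<omega> ^ j * z)) / of_nat k)"
    if z: "norm z < 1" for z
  proof -
    have "(\<lambda>n. \<Sum>j<k. c n * (\<omega> ^ j * z) ^ n) sums (\<Sum>j<k. f (\<omega> ^ j * z))"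
      unfolding f_def using S z rotate by (intro sums_sum summable_sums) auto
    moreover have "(\<Sum>j<k. c n * (\<omega> ^ j * z) ^ n) = of_nat k * (if k dvd n then c n * z ^ n else 0)"
      for n
    proof -
      have "(\<Sum>j<k. c n * (\<omega> ^ j * z) ^ n) = c n * z ^ n * (\<Sum>j<k. (\<omega> ^ j) ^ n)"
        by (simp add: sum_distrib_left algebra_simps)
      then show ?thesis
        using sum_powers_root_of_unity[OF k, of n] by (simp add: \<omega>_def)
    qed
    ultimately have "(\<lambda>n. if k dvd n then c n * z ^ n else 0) sums
        ((\<Sum>j<k. f (\<omega> ^ j * z)) / of_nat k)"
      using sums_divide[where c = "of_nat k"] k by fastforce
    moreover have "strict_mono (\<lambda>m. m * k)"
      using k by (intro strict_monoI) simp
    ultimately show ?thesis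
      by (subst (asm) sums_mono_reindex[symmetric, where g = "\<lambda>m. m * k"])
        (auto simp: power_mult[symmetric] mult.commute dvd_def)
  qed
  have average_le: "norm ((\<Sum>j<k. f (\<omega> ^ j * z)) / of_nat k) \<le> 1" if "norm z < 1" for z
  proof -
    have "norm (\<Sum>j<k. f (\<omega> ^ j * z)) \<le> (\<Sum>j<k. 1)"
      unfolding f_def using B that rotate by (intro sum_norm_le) auto
    then show ?thesis
      using k by (simp add: norm_divide divide_le_eq)
  qed
  have "norm (c (1 * k)) \<le> 1 - (norm (c (0 * k)))\<^sup>2"
  proof (rule bounded_power_series_coeff_1_le)
    fix w :: complex
    assume "norm w < 1"
    then obtain z where "norm z < 1" "z ^ k = w"
      using complex_nth_root_in_disc k by blast
    then show "summable (\<lambda>m. c (m * k) * w ^ m)" "norm (\<Sum>m. c (m * k) * w ^ m) \<le> 1"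
      using average average_le by (auto simp: sums_iff)
  qed
  then show ?thesis
    by simp
qed

section \<open>Octonion arithmetic in coordinates\<close>

definition Oct :: "real \<Rightarrow> real \<Rightarrow> real \<Rightarrow> real \<Rightarrow> real \<Rightarrow> real \<Rightarrow> real \<Rightarrow> real \<Rightarrow> oct" where
  "Oct a b c d e f g h = ((Complex a b, Complex c d), (Complex e f, Complex g h))"

lemma Oct_cases:
  obtains a b c d e f g h where "x = Oct a b c d e f g h"
  unfolding Oct_def by (metis complex.exhaust prod.exhaust)

lemma omult_Oct:
  "omult (Oct a b c d e f g h) (Oct a' b' c' d' e' f' g' h') = Oct
    (a*a' - b*b' - c*c' - d*d' - e*e' - f*f' - g*g' - h*h')
    (a*b' + a'*b + c*d' - c'*d + e*f' - e'*f - g*h' + g'*h)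
    (a*c' + a'*c - b*d' + b'*d + e*g' - e'*g + f*h' - f'*h)
    (a*d' + a'*d + b*c' - b'*c + e*h' - e'*h - f*g' + f'*g)
    (a*e' + a'*e - b*f' + b'*f - c*g' + c'*g - d*h' + d'*h)
    (a*f' + a'*f + b*e' - b'*e - c*h' + c'*h + d*g' - d'*g)
    (a*g' + a'*g + b*h' - b'*h + c*e' - c'*e - d*f' + d'*f)
    (a*h' + a'*h - b*g' + b'*g + c*f' - c'*f + d*e' - d'*e)"
  by (simp add: Oct_def omult_def qmult_def qconj_def complex_eq_iff algebra_simps)

lemma norm_Oct: "norm (Oct a b c d e f g h) = sqrt (a\<^sup>2 + b\<^sup>2 + c\<^sup>2 + d\<^sup>2 + e\<^sup>2 + f\<^sup>2 + g\<^sup>2 + h\<^sup>2)"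
  by (simp add: Oct_def norm_prod_def cmod_def add.assoc)

lemma inner_Oct:
  "inner (Oct a b c d e f g h) (Oct a' b' c' d' e' f' g' h') =
    a*a' + b*b' + c*c' + d*d' + e*e' + f*f' + g*g' + h*h'"
  by (simp add: Oct_def inner_prod_def inner_complex_def add.assoc)

lemma Oct_eq_iff:
  "Oct a b c d e f g h = Oct a' b' c' d' e' f' g' h' \<longleftrightarrow>
    a = a' \<and> b = b' \<and> c = c' \<and> d = d' \<and> e = e' \<and> f = f' \<and> g = g' \<and> h = h'"
  by (simp add: Oct_def)

lemma Oct_add:
  "Oct a b c d e f g h + Oct a' b' c' d' e' f' g' h' =
    Oct (a+a') (b+b') (c+c') (d+d') (e+e') (f+f') (g+g') (h+h')"
  by (simp add: Oct_def complex_eq_iff)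

lemma scaleR_Oct: "r *\<^sub>R Oct a b c d e f g h = Oct (r*a) (r*b) (r*c) (r*d) (r*e) (r*f) (r*g) (r*h)"
  by (simp add: Oct_def complex_eq_iff)

lemma uminus_Oct: "- Oct a b c d e f g h = Oct (-a) (-b) (-c) (-d) (-e) (-f) (-g) (-h)"
  by (simp add: Oct_def complex_eq_iff)

lemma oone_Oct: "oone = Oct 1 0 0 0 0 0 0 0"
  by (simp add: Oct_def oone_def complex_eq_iff)

lemma oconj_Oct: "oconj (Oct a b c d e f g h) = Oct a (-b) (-c) (-d) (-e) (-f) (-g) (-h)"
  by (simp add: Oct_def oconj_def qconj_def complex_eq_iff)

lemmas Oct_arith = omult_Oct inner_Oct Oct_eq_iff Oct_add scaleR_Oct uminus_Oct oone_Oct oconj_Oct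

lemma omult_add_left: "omult (x + y) z = omult x z + omult y z"
  by (cases x rule: Oct_cases, cases y rule: Oct_cases, cases z rule: Oct_cases)
    (simp add: Oct_arith algebra_simps)

lemma omult_add_right: "omult x (y + z) = omult x y + omult x z"
  by (cases x rule: Oct_cases, cases y rule: Oct_cases, cases z rule: Oct_cases)
    (simp add: Oct_arith algebra_simps)

lemma omult_scaleR_left: "omult (r *\<^sub>R x) y = r *\<^sub>R omult x y"
  by (cases x rule: Oct_cases, cases y rule: Oct_cases) (simp add: Oct_arith algebra_simps)

lemma omult_scaleR_right: "omult x (r *\<^sub>R y) = r *\<^sub>R omult x y"
  by (cases x rule: Oct_cases, cases y rule: Oct_cases) (simp add: Oct_arith algebra_simps)

lemma omult_oone_left [simp]: "omult oone x = x"
  by (cases x rule: Oct_cases) (simp add: Oct_arith)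

lemma omult_oone_right [simp]: "omult x oone = x"
  by (cases x rule: Oct_cases) (simp add: Oct_arith)

lemma norm_oone [simp]: "norm oone = 1"
  by (simp add: oone_Oct norm_Oct)

lemma norm_omult: "norm (omult x y) = norm x * norm y"
proof -
  \<comment> \<open>Degen's eight-square identity\<close>
  have eight_squares:
    "(a*a' - b*b' - c*c' - d*d' - e*e' - f*f' - g*g' - h*h')\<^sup>2 +
     (a*b' + a'*b + c*d' - c'*d + e*f' - e'*f - g*h' + g'*h)\<^sup>2 +
     (a*c' + a'*c - b*d' + b'*d + e*g' - e'*g + f*h' - f'*h)\<^sup>2 +
     (a*d' + a'*d + b*c' - b'*c + e*h' - e'*h - f*g' + f'*g)\<^sup>2 +
     (a*e' + a'*e - b*f' + b'*f - c*g' + c'*g - d*h' + d'*h)\<^sup>2 +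
     (a*f' + a'*f + b*e' - b'*e - c*h' + c'*h + d*g' - d'*g)\<^sup>2 +
     (a*g' + a'*g + b*h' - b'*h + c*e' - c'*e - d*f' + d'*f)\<^sup>2 +
     (a*h' + a'*h - b*g' + b'*g + c*f' - c'*f + d*e' - d'*e)\<^sup>2 =
     (a\<^sup>2 + b\<^sup>2 + c\<^sup>2 + d\<^sup>2 + e\<^sup>2 + f\<^sup>2 + g\<^sup>2 + h\<^sup>2) *
     (a'\<^sup>2 + b'\<^sup>2 + c'\<^sup>2 + d'\<^sup>2 + e'\<^sup>2 + f'\<^sup>2 + g'\<^sup>2 + h'\<^sup>2)"
    for a b c d e f g h a' b' c' d' e' f' g' h' :: real
    by algebra
  show ?thesis
    by (cases x rule: Oct_cases, cases y rule: Oct_cases)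
      (simp only: omult_Oct norm_Oct eight_squares real_sqrt_mult)
qed

lemma bounded_bilinear_omult: "bounded_bilinear omult"
proof
  show "\<exists>K. \<forall>x y. norm (omult x y) \<le> norm x * norm y * K"
    by (rule exI[of _ 1]) (simp add: norm_omult)
qed (simp_all add: omult_add_left omult_add_right omult_scaleR_left omult_scaleR_right)

lemmas omult_zero_left [simp] = bounded_bilinear.zero_left[OF bounded_bilinear_omult]

lemma norm_opow: "norm (opow x n) = norm x ^ n"
  by (induction n) (simp_all add: norm_omult)

lemma omult_oconj_right_cancel: "omult (omult y (oconj x)) x = (norm x)\<^sup>2 *\<^sub>R y"
proof (cases x rule: Oct_cases, cases y rule: Oct_cases)
  fix a b c d e f g h a' b' c' d' e' f' g' h'
  assume xy: "x = Oct a b c d e f g h" "y = Oct a' b' c' d' e' f' g' h'"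
  show ?thesis
    unfolding xy by (simp add: Oct_arith power2_norm_eq_inner) algebra
qed

section \<open>Complex slices\<close>

definition oct_imag_unit :: "oct \<Rightarrow> bool" where
  "oct_imag_unit I \<longleftrightarrow> inner I oone = 0 \<and> norm I = 1"

lemma omult_imag_unit_self:
  assumes "oct_imag_unit I"
  shows "omult I I = - oone"
proof (cases I rule: Oct_cases)
  case (1 a b c d e f g h)
  with assms have "a = 0" "b\<^sup>2 + c\<^sup>2 + d\<^sup>2 + e\<^sup>2 + f\<^sup>2 + g\<^sup>2 + h\<^sup>2 = 1"
    by (auto simp: oct_imag_unit_def Oct_arith norm_Oct)
  then show ?thesis
    using 1 by (simp add: Oct_arith power2_eq_square)
qed

lemma inner_omult_imag_left:
  assumes "inner I oone = 0"
  shows "inner (omult I x) y = - inner x (omult I y)"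
  using assms by (cases I rule: Oct_cases, cases x rule: Oct_cases, cases y rule: Oct_cases)
    (simp add: Oct_arith algebra_simps)

lemma inner_omult_unit_left:
  assumes "norm I = 1"
  shows "inner (omult I x) (omult I y) = inner x y"
proof -
  have "(norm (omult I (x + y)))\<^sup>2 = (norm (x + y))\<^sup>2"
    "(norm (omult I x))\<^sup>2 = (norm x)\<^sup>2" "(norm (omult I y))\<^sup>2 = (norm y)\<^sup>2"
    by (simp_all add: norm_omult assms)
  then show ?thesis
    unfolding power2_norm_eq_inner omult_add_right
    by (simp add: inner_add_left inner_add_right inner_commute)
qed

definition oct_of_complex :: "oct \<Rightarrow> complex \<Rightarrow> oct" where
  "oct_of_complex I z = Re z *\<^sub>R oone + Im z *\<^sub>R I"

lemma oct_of_complex_mult: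
  assumes "oct_imag_unit I"
  shows "oct_of_complex I (z * w) = omult (oct_of_complex I z) (oct_of_complex I w)"
  using omult_imag_unit_self[OF assms]
  by (simp add: oct_of_complex_def omult_add_left omult_add_right omult_scaleR_left
      omult_scaleR_right algebra_simps)

lemma opow_oct_of_complex:
  assumes "oct_imag_unit I"
  shows "opow (oct_of_complex I z) n = oct_of_complex I (z ^ n)"
  by (induction n) (simp_all add: oct_of_complex_mult[OF assms], simp add: oct_of_complex_def)

lemma norm_oct_of_complex:
  assumes "oct_imag_unit I"
  shows "norm (oct_of_complex I z) = norm z"
proof -
  have "inner I I = 1" "inner oone oone = 1" "inner I oone = 0"
    using assms by (simp_all add: oct_imag_unit_def dot_square_norm)
  then have "inner (oct_of_complex I z) (oct_of_complex I z) = (Re z)\<^sup>2 + (Im z)\<^sup>2"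
    unfolding oct_of_complex_def
    by (simp add: inner_add_left inner_add_right inner_commute power2_eq_square)
  then show ?thesis
    by (simp add: norm_eq_sqrt_inner[of "oct_of_complex I z"] cmod_def)
qed

lemma bounded_linear_oct_of_complex: "bounded_linear (oct_of_complex I)"
  unfolding oct_of_complex_def
  by (intro bounded_linear_add bounded_linear_compose[OF bounded_linear_scaleR_left]
      bounded_linear_Re bounded_linear_Im)

lemma oct_in_complex_slice:
  obtains I z where "oct_imag_unit I" "x = oct_of_complex I z"
proof -
  define v where "v = x - inner x oone *\<^sub>R oone"
  have v_imag: "inner v oone = 0"
    by (simp add: v_def inner_diff_left dot_square_norm)
  show ?thesis
  proof (cases "v = 0")
    case True
    define I :: oct where "I = ((\<i>, 0), (0, 0))"
    have "oct_imag_unit I"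
      by (simp add: oct_imag_unit_def I_def oone_def inner_prod_def norm_prod_def)
    moreover have "x = oct_of_complex I (of_real (inner x oone))"
      using True by (simp add: v_def oct_of_complex_def)
    ultimately show ?thesis
      using that by blast
  next
    case False
    then have "oct_imag_unit (v /\<^sub>R norm v)"
      using v_imag by (simp add: oct_imag_unit_def)
    moreover have "x = oct_of_complex (v /\<^sub>R norm v) (Complex (inner x oone) (norm v))"
      using False by (simp add: oct_of_complex_def v_def)
    ultimately show ?thesis
      using that by blast
  qed
qed

definition slice_proj :: "oct \<Rightarrow> oct \<Rightarrow> oct \<Rightarrow> complex" where
  "slice_proj I u x = Complex (inner x u) (inner x (omult I u))"

lemma slice_proj_omult:
  assumes "oct_imag_unit I"
  shows "slice_proj I u (omult (oct_of_complex I z) x) = z * slice_proj I u x"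
proof -
  have "omult (oct_of_complex I z) x = Re z *\<^sub>R x + Im z *\<^sub>R omult I x"
    by (simp add: oct_of_complex_def omult_add_left omult_scaleR_left)
  moreover have "inner (omult I x) u = - inner x (omult I u)"
    using assms by (simp add: oct_imag_unit_def inner_omult_imag_left)
  moreover have "inner (omult I x) (omult I u) = inner x u"
    using assms by (simp add: oct_imag_unit_def inner_omult_unit_left)
  ultimately show ?thesis
    by (simp add: slice_proj_def complex_eq_iff algebra_simps)
qed

lemma bounded_linear_slice_proj: "bounded_linear (slice_proj I u)"
proof -
  have "slice_proj I u = (\<lambda>x. of_real (inner x u) + \<i> * of_real (inner x (omult I u)))"
    by (auto simp: slice_proj_def complex_eq_iff)
  moreover have "bounded_linear \<dots>"
    by (intro bounded_linear_add bounded_linear_compose[OF bounded_linear_mult_right]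
        bounded_linear_compose[OF bounded_linear_of_real] bounded_linear_inner_left)
  ultimately show ?thesis
    by simp
qed

lemma inner_omult_imag_self:
  assumes "oct_imag_unit I"
  shows "inner u (omult I u) = 0"
  using inner_omult_imag_left[of I u u] assms by (simp add: oct_imag_unit_def inner_commute)

lemma slice_proj_self:
  assumes "oct_imag_unit I" "norm u = 1"
  shows "slice_proj I u u = 1"
  using assms inner_omult_imag_self[OF assms(1)]
  by (simp add: slice_proj_def complex_eq_iff dot_square_norm)

lemma norm_slice_proj_le:
  assumes I: "oct_imag_unit I" and u: "norm u = 1"
  shows "norm (slice_proj I u x) \<le> norm x"
proof -
  define v where "v = omult I u"
  define p where "p = inner x u"
  define q where "q = inner x v"
  have "inner u u = 1" "inner v v = 1" "inner u v = 0"
    using I u inner_omult_imag_self[OF I]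
    by (simp_all add: v_def dot_square_norm norm_omult oct_imag_unit_def)
  then have "inner (x - p *\<^sub>R u - q *\<^sub>R v) (x - p *\<^sub>R u - q *\<^sub>R v) = inner x x - p\<^sup>2 - q\<^sup>2"
    by (simp add: inner_commute p_def q_def power2_eq_square algebra_simps)
  then have "p\<^sup>2 + q\<^sup>2 \<le> (norm x)\<^sup>2"
    using inner_ge_zero[of "x - p *\<^sub>R u - q *\<^sub>R v"] by (simp add: dot_square_norm)
  then have "(norm (slice_proj I u x))\<^sup>2 \<le> (norm x)\<^sup>2"
    by (simp add: slice_proj_def cmod_power2 p_def q_def v_def)
  then show ?thesis
    by (simp add: power2_le_iff_abs_le)
qed

section \<open>The Bohr inequality\<close>

lemma slice_series_at_0: "slice_series a 0 = a 0"
proof -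
  have "(\<lambda>n. omult (opow 0 n) (a n)) = (\<lambda>n. if n = 0 then a 0 else 0)"
  proof
    fix n
    show "omult (opow 0 n) (a n) = (if n = 0 then a 0 else 0)"
      by (cases n) simp_all
  qed
  then show ?thesis
    unfolding slice_series_def using sums_single[of 0 "\<lambda>_. a 0"] by (simp add: sums_iff)
qed

lemma slice_proj_slice_series_sums:
  assumes SR: "slice_regular_ball a" and I: "oct_imag_unit I" and z: "norm z < 1"
  shows "(\<lambda>n. slice_proj I u (a n) * z ^ n) sums
    slice_proj I u (slice_series a (oct_of_complex I z))"
proof -
  have "summable (\<lambda>n. omult (opow (oct_of_complex I z) n) (a n))"
    using SR z norm_oct_of_complex[OF I] unfolding slice_regular_ball_def by metis
  then have "(\<lambda>n. omult (oct_of_complex I (z ^ n)) (a n)) sums slice_series a (oct_of_complex I z)"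
    unfolding slice_series_def by (simp add: opow_oct_of_complex[OF I] summable_sums)
  from bounded_linear.sums[OF bounded_linear_slice_proj[of I u] this] show ?thesis
    by (simp add: slice_proj_omult[OF I] mult.commute)
qed

lemma slice_regular_coeff_le:
  assumes SR: "slice_regular_ball a"
    and BD: "\<And>x. norm x < 1 \<Longrightarrow> norm (slice_series a x) \<le> 1"
    and k: "k > 0"
  shows "norm (a k) \<le> 1 - (norm (a 0))\<^sup>2"
proof -
  obtain u where u: "norm u = 1" and a0: "a 0 = norm (a 0) *\<^sub>R u"
  proof (cases "a 0 = 0")
    case True
    then show ?thesis
      using that[of oone] by simp
  next
    case False
    then show ?thesis
      using that[of "a 0 /\<^sub>R norm (a 0)"] by simp
  qed
  obtain I \<gamma> where I: "oct_imag_unit I" and \<gamma>: "omult (a k) (oconj u) = oct_of_complex I \<gamma>"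
    using oct_in_complex_slice by metis
  have ak: "a k = omult (oct_of_complex I \<gamma>) u"
    using omult_oconj_right_cancel[of "a k" u] by (simp add: \<gamma> u)
  have norm_\<gamma>: "norm \<gamma> = norm (a k)"
    using norm_oct_of_complex[OF I, of \<gamma>] by (simp add: ak norm_omult u)
  define c where "c n = slice_proj I u (a n)" for n
  have "norm (c k) \<le> 1 - (norm (c 0))\<^sup>2"
  proof (rule bounded_power_series_coeff_le[OF _ _ k])
    fix z :: complex
    assume z: "norm z < 1"
    note sums = slice_proj_slice_series_sums[OF SR I z, of u]
    then show "summable (\<lambda>n. c n * z ^ n)"
      by (simp add: c_def sums_summable)
    have "norm (slice_proj I u (slice_series a (oct_of_complex I z))) \<le> 1"
      using norm_slice_proj_le[OF I u] BD z norm_oct_of_complex[OF I] order_trans by metis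
    then show "norm (\<Sum>n. c n * z ^ n) \<le> 1"
      using sums by (simp add: c_def sums_iff)
  qed
  moreover have "c 0 = of_real (norm (a 0))"
    unfolding c_def
    by (subst a0) (simp add: linear.scaleR[OF bounded_linear.linear[OF bounded_linear_slice_proj]]
        slice_proj_self[OF I u] scaleR_conv_of_real)
  moreover have "c k = \<gamma>"
    by (simp add: c_def ak slice_proj_omult[OF I] slice_proj_self[OF I u])
  ultimately show ?thesis
    using norm_\<gamma> by simp
qed

lemma bohr_majorant_le_1:
  fixes m t r :: real
  assumes m: "0 < m" "m \<le> 2" and t: "0 \<le> t" "t \<le> 1" and r: "0 \<le> r" "r \<le> m / (2 + m)"
  shows "t powr m + (1 - t\<^sup>2) * (r / (1 - r)) \<le> 1"
proof -
  have "m / (2 + m) < 1"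
    using m by simp
  then have "r < 1"
    using r by linarith
  moreover have "r * (2 + m) \<le> m"
    using r m by (simp add: le_divide_eq)
  ultimately have "r / (1 - r) \<le> m / 2"
    by (simp add: pos_divide_le_eq algebra_simps)
  moreover have "0 \<le> 1 - t\<^sup>2"
    using t by (simp add: power_le_one)
  ultimately have "(1 - t\<^sup>2) * (r / (1 - r)) \<le> (1 - t\<^sup>2) * (m / 2)"
    by (rule mult_left_mono)
  moreover have "t powr m \<le> 1 - (1 - t\<^sup>2) * (m / 2)"
  proof (cases "t = 0")
    case False
    then have "t\<^sup>2 = t powr 2"
      using t by (simp add: powr_realpow)
    then have "t powr m = (t\<^sup>2) powr (m / 2) * 1 powr (1 - m / 2)"
      by (simp add: powr_powr)
    also have "\<dots> \<le> (m / 2) * t\<^sup>2 + (1 - m / 2) * 1"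
      using m False by (intro Youngs_inequality_0) auto
    finally show ?thesis
      by (simp add: algebra_simps)
  qed (use m in simp)
  ultimately show ?thesis
    by linarith
qed

lemma slice_regular_bohr_inequality:
  assumes m: "0 < m" "m \<le> 2"
    and SR: "slice_regular_ball a"
    and BD: "\<And>x. norm x < 1 \<Longrightarrow> norm (slice_series a x) \<le> 1"
    and x: "norm x \<le> m / (2 + m)"
  shows "bohr_tail_summable a x \<and> bohr_sum m a x \<le> 1"
proof -
  define r where "r = norm x"
  define t where "t = norm (a 0)"
  have "m / (2 + m) < 1"
    using m by simp
  then have "r < 1"
    using x unfolding r_def by linarith
  have t: "t \<le> 1"
    using BD[of 0] by (simp add: slice_series_at_0 t_def)
  have tail_le: "norm (omult (opow x (Suc k)) (a (Suc k))) \<le> (1 - t\<^sup>2) * r ^ Suc k" for k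
  proof -
    have "norm (omult (opow x (Suc k)) (a (Suc k))) = r ^ Suc k * norm (a (Suc k))"
      by (simp add: norm_omult norm_opow r_def)
    also have "\<dots> \<le> r ^ Suc k * (1 - t\<^sup>2)"
      using slice_regular_coeff_le[OF SR BD, of "Suc k"] by (simp add: r_def t_def mult_left_mono)
    finally show ?thesis
      by (simp add: mult.commute)
  qed
  have "(\<lambda>k. ((1 - t\<^sup>2) * r) * r ^ k) sums (((1 - t\<^sup>2) * r) * (1 / (1 - r)))"
    using \<open>r < 1\<close> by (intro sums_mult geometric_sums) (simp add: r_def)
  then have geometric: "(\<lambda>k. (1 - t\<^sup>2) * r ^ Suc k) sums ((1 - t\<^sup>2) * (r / (1 - r)))"
    by (simp add: mult.assoc)
  have summable: "summable (\<lambda>k. norm (omult (opow x (Suc k)) (a (Suc k))))"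
    using tail_le geometric by (intro summable_comparison_test[OF _ sums_summable]) auto
  have "bohr_sum m a x \<le> t powr m + (1 - t\<^sup>2) * (r / (1 - r))"
    using suminf_le[OF tail_le summable sums_summable[OF geometric]] geometric
    by (simp add: bohr_sum_def t_def sums_iff)
  also have "\<dots> \<le> 1"
    using bohr_majorant_le_1[OF m, of t r] t x by (simp add: t_def r_def)
  finally show ?thesis
    using summable by (simp add: bohr_tail_summable_def)
qed

section \<open>Sharpness of the radius\<close>

lemma bohr_majorant_exceeds_1:
  fixes m r :: real
  assumes m: "0 < m" and r: "m / (2 + m) < r" "r < 1"
  obtains t where "0 < t" "t < 1" "1 < t powr m + (1 - t\<^sup>2) * (r / (1 - t * r))"
proof -
  define h where "h t = t powr m + (1 - t\<^sup>2) * (r / (1 - t * r))" for t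
  have "(h has_real_derivative m - 2 * r / (1 - r)) (at 1)"
  proof -
    have "(h has_real_derivative m * 1 powr (m - 1) + (- (2 * 1) * (r / (1 - 1 * r)) +
        (1 - 1\<^sup>2) * (r * (0 - 1 * r) / (1 - 1 * r)\<^sup>2) * -1)) (at 1)"
      unfolding h_def using r
      by (intro derivative_eq_intros has_real_derivative_powr refl) auto
    then show ?thesis
      by simp
  qed
  moreover have "m - 2 * r / (1 - r) < 0"
  proof -
    have "m < r * (2 + m)"
      using r m by (simp add: divide_less_eq)
    then show ?thesis
      using r by (simp add: field_simps)
  qed
  ultimately obtain d where d: "d > 0" "\<And>e. e > 0 \<Longrightarrow> e < d \<Longrightarrow> h 1 < h (1 - e)"
    using DERIV_neg_dec_left by blast
  define e where "e = min (d / 2) (1 / 2)"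
  have "e > 0" "e < d" "e \<le> 1 / 2"
    using d by (auto simp: e_def)
  moreover have "h 1 = 1"
    by (simp add: h_def)
  ultimately show ?thesis
    using d(2) that[of "1 - e"] by (simp add: h_def)
qed

definition moebius_coeff :: "real \<Rightarrow> nat \<Rightarrow> real" where
  "moebius_coeff t n = (if n = 0 then t else - (1 - t\<^sup>2) * t ^ (n - 1))"

lemma moebius_coeff_sums:
  fixes t :: real and z :: complex
  assumes t: "\<bar>t\<bar> < 1" and z: "norm z < 1"
  shows "(\<lambda>n. of_real (moebius_coeff t n) * z ^ n) sums - Moebius_function 0 (of_real t) z"
proof -
  have "\<bar>t\<bar> * norm z < 1 * 1"
    using t z by (intro mult_strict_mono') auto
  then have tz: "norm (of_real t * z) < 1"
    by (simp add: norm_mult)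
  then have den: "1 - of_real t * z \<noteq> 0"
    by auto
  define q where "q = - of_real (1 - t\<^sup>2) * z"
  have "(\<lambda>n. q * (of_real t * z) ^ n) sums (q * (1 / (1 - of_real t * z)))"
    using tz by (intro sums_mult geometric_sums)
  moreover have "of_real (moebius_coeff t (Suc n)) * z ^ Suc n = q * (of_real t * z) ^ n" for n
    by (simp add: moebius_coeff_def q_def power_mult_distrib)
  ultimately have "(\<lambda>n. of_real (moebius_coeff t (Suc n)) * z ^ Suc n) sums
      (q / (1 - of_real t * z))"
    by simp
  then have "(\<lambda>n. of_real (moebius_coeff t n) * z ^ n) sums
      (q / (1 - of_real t * z) + of_real (moebius_coeff t 0) * z ^ 0)"
    by (rule sums_Suc_iff[THEN iffD1])
  moreover have "q / (1 - of_real t * z) + of_real (moebius_coeff t 0) =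
      - Moebius_function 0 (of_real t) z"
    using den
    by (simp add: Moebius_function_simple moebius_coeff_def q_def field_simps power2_eq_square)
  ultimately show ?thesis
    by simp
qed

lemma real_coeff_slice_series_sums:
  assumes I: "oct_imag_unit I" and sums: "(\<lambda>n. of_real (s n) * z ^ n) sums w"
  shows "(\<lambda>n. omult (opow (oct_of_complex I z) n) (s n *\<^sub>R oone)) sums oct_of_complex I w"
proof -
  have "omult (opow (oct_of_complex I z) n) (s n *\<^sub>R oone) = s n *\<^sub>R oct_of_complex I (z ^ n)"
    for n
    by (simp add: opow_oct_of_complex[OF I] omult_scaleR_right)
  moreover have "oct_of_complex I (of_real (s n) * z ^ n) = s n *\<^sub>R oct_of_complex I (z ^ n)" for n
    by (simp add: oct_of_complex_def scaleR_add_right)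
  ultimately show ?thesis
    using bounded_linear.sums[OF bounded_linear_oct_of_complex[of I] sums] by simp
qed

lemma moebius_slice_regular:
  fixes t :: real
  assumes t: "\<bar>t\<bar> < 1"
  shows "slice_regular_ball (\<lambda>n. moebius_coeff t n *\<^sub>R oone)"
    and "\<And>y. norm y < 1 \<Longrightarrow> norm (slice_series (\<lambda>n. moebius_coeff t n *\<^sub>R oone) y) < 1"
proof -
  have moebius_sums: "\<exists>w. norm w < 1 \<and> (\<lambda>n. omult (opow y n) (moebius_coeff t n *\<^sub>R oone)) sums w"
    if y: "norm y < 1" for y
  proof -
    obtain I z where I: "oct_imag_unit I" and yz: "y = oct_of_complex I z"
      using oct_in_complex_slice by metis
    have z: "norm z < 1"
      using y by (simp add: yz norm_oct_of_complex[OF I])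
    have "norm (oct_of_complex I (- Moebius_function 0 (of_real t) z)) < 1"
      using Moebius_function_norm_lt_1[of "of_real t" z 0] t z
      by (simp add: norm_oct_of_complex[OF I])
    moreover have "(\<lambda>n. omult (opow y n) (moebius_coeff t n *\<^sub>R oone)) sums
        oct_of_complex I (- Moebius_function 0 (of_real t) z)"
      unfolding yz by (rule real_coeff_slice_series_sums[OF I moebius_coeff_sums[OF t z]])
    ultimately show ?thesis
      by (intro exI conjI)
  qed
  show "slice_regular_ball (\<lambda>n. moebius_coeff t n *\<^sub>R oone)"
    unfolding slice_regular_ball_def
  proof (intro allI impI)
    fix y :: oct
    assume "norm y < 1"
    with moebius_sums obtain w where "(\<lambda>n. omult (opow y n) (moebius_coeff t n *\<^sub>R oone)) sums w"
      by blast
    then show "summable (\<lambda>n. omult (opow y n) (moebius_coeff t n *\<^sub>R oone))"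
      by (rule sums_summable)
  qed
  show "norm (slice_series (\<lambda>n. moebius_coeff t n *\<^sub>R oone) y) < 1" if y: "norm y < 1" for y
  proof -
    obtain w where "norm w < 1" "(\<lambda>n. omult (opow y n) (moebius_coeff t n *\<^sub>R oone)) sums w"
      using moebius_sums[OF y] by blast
    then show ?thesis
      by (simp add: slice_series_def sums_iff)
  qed
qed

lemma moebius_bohr_sum:
  fixes t r :: real
  assumes t: "0 \<le> t" "t < 1" and r: "0 \<le> r" "r < 1"
  shows "bohr_tail_summable (\<lambda>n. moebius_coeff t n *\<^sub>R oone) (r *\<^sub>R oone)"
    and "bohr_sum m (\<lambda>n. moebius_coeff t n *\<^sub>R oone) (r *\<^sub>R oone) =
      t powr m + (1 - t\<^sup>2) * (r / (1 - t * r))"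
proof -
  have tail: "norm (omult (opow (r *\<^sub>R oone) (Suc k)) (moebius_coeff t (Suc k) *\<^sub>R oone)) =
      ((1 - t\<^sup>2) * r) * (t * r) ^ k" for k
    using t r by (simp add: norm_omult norm_opow moebius_coeff_def abs_mult power_le_one
        power_mult_distrib)
  have "t * r < 1 * 1"
    using t r by (intro mult_strict_mono') auto
  then have "(\<lambda>k. ((1 - t\<^sup>2) * r) * (t * r) ^ k) sums (((1 - t\<^sup>2) * r) * (1 / (1 - t * r)))"
    using t r by (intro sums_mult geometric_sums) simp
  then have "(\<lambda>k. norm (omult (opow (r *\<^sub>R oone) (Suc k)) (moebius_coeff t (Suc k) *\<^sub>R oone)))
      sums ((1 - t\<^sup>2) * (r / (1 - t * r)))"
    unfolding tail by simp
  then show "bohr_tail_summable (\<lambda>n. moebius_coeff t n *\<^sub>R oone) (r *\<^sub>R oone)"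
    and "bohr_sum m (\<lambda>n. moebius_coeff t n *\<^sub>R oone) (r *\<^sub>R oone) =
      t powr m + (1 - t\<^sup>2) * (r / (1 - t * r))"
    using t by (auto simp: bohr_tail_summable_def bohr_sum_def sums_iff moebius_coeff_def)
qed

lemma bohr_radius_sharp:
  fixes m r :: real
  assumes m: "0 < m" and r: "m / (2 + m) < r" "r < 1"
  shows "\<exists>a x. slice_regular_ball a \<and> (\<forall>y. norm y < 1 \<longrightarrow> norm (slice_series a y) \<le> 1)
    \<and> norm x = r \<and> bohr_tail_summable a x \<and> bohr_sum m a x > 1"
proof -
  obtain t where t: "0 < t" "t < 1" and exceeds: "1 < t powr m + (1 - t\<^sup>2) * (r / (1 - t * r))"
    using bohr_majorant_exceeds_1[OF m r] by blast
  have "0 < m / (2 + m)"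
    using m by simp
  then have "0 < r"
    using r by linarith
  have "\<bar>t\<bar> < 1"
    using t by simp
  note example = moebius_slice_regular[OF this] moebius_bohr_sum[of t r]
  show ?thesis
  proof (intro exI conjI allI impI)
    show "slice_regular_ball (\<lambda>n. moebius_coeff t n *\<^sub>R oone)"
      by (rule example(1))
    show "norm (slice_series (\<lambda>n. moebius_coeff t n *\<^sub>R oone) y) \<le> 1" if "norm y < 1" for y
      using example(2)[OF that] by (rule less_imp_le)
    show "norm (r *\<^sub>R oone) = r"
      using \<open>0 < r\<close> by simp
    show "bohr_tail_summable (\<lambda>n. moebius_coeff t n *\<^sub>R oone) (r *\<^sub>R oone)"
      using example(3) t r \<open>0 < r\<close> by simp
    show "1 < bohr_sum m (\<lambda>n. moebius_coeff t n *\<^sub>R oone) (r *\<^sub>R oone)"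
      using example(4) t r \<open>0 < r\<close> exceeds by simp
  qed
qed

theorem theorem1p1:
  fixes m :: real
  assumes "0 < m" and "m \<le> 2"
  shows "(\<forall>a::nat \<Rightarrow> oct. slice_regular_ball a
            \<longrightarrow> (\<forall>x. norm x < 1 \<longrightarrow> norm (slice_series a x) \<le> 1)
            \<longrightarrow> (\<forall>x::oct. norm x < 1 \<and> norm x \<le> m / (2 + m)
                   \<longrightarrow> bohr_tail_summable a x \<and> bohr_sum m a x \<le> 1))
       \<and> (\<forall>r::real. m / (2 + m) < r \<and> r < 1 \<longrightarrow>
            (\<exists>a::nat \<Rightarrow> oct. \<exists>x::oct. slice_regular_ball a
                 \<and> (\<forall>y. norm y < 1 \<longrightarrow> norm (slice_series a y) \<le> 1)
                 \<and> norm x = r \<and> bohr_tail_summable a x \<and> bohr_sum m a x > 1))"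
  using slice_regular_bohr_inequality[OF assms] bohr_radius_sharp[OF assms(1)] by blast

end
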